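(* Let $E(\delta):=\big((\lfloor\delta^{-1}\rfloor+1)\delta-1\big)\log\lfloor\delta^{-1}\rfloor+\big(1-\lfloor\delta^{-1}\rfloor\delta\big)\log\big(\lfloor\delta^{-1}\rfloor+1\big)$ for $\delta\in(0,1]$ (base-2 logarithms). Then $$\max_{\delta\in(0,1]}\ \frac{E(\delta)+(1-\delta)}{2}=\frac{\log 80}{10},$$ attained at $\delta=1/5$. Consequently, with $I(m,t)$ the maximum number of $t$-element maximal independent sets in an $m$-vertex graph, $\sum_{t=1}^m\sqrt{I(m,t)}\,2^{(m-t)/2}=O^*(80^{m/10})=O(1.5500^m)$.
   Context: Logarithms are base 2. $I(m,t)=\lfloor m/t\rfloor^{(\lfloor m/t\rfloor+1)t-m}(\lfloor m/t\rfloor+1)^{m-\lfloor m/t\rfloor t}$. $O^*(f(m))$ means $O(m^c f(m))$ for some constant $c$. *)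

theory Defs
  imports "HOL-Analysis.Analysis" "HOL-Library.Landau_Symbols"
begin

definition E :: "real \<Rightarrow> real" where
  "E \<delta> = ((real_of_int \<lfloor>1/\<delta>\<rfloor> + 1) * \<delta> - 1) * log 2 (real_of_int \<lfloor>1/\<delta>\<rfloor>)
          + (1 - real_of_int \<lfloor>1/\<delta>\<rfloor> * \<delta>) * log 2 (real_of_int \<lfloor>1/\<delta>\<rfloor> + 1)"

definition F :: "real \<Rightarrow> real" where
  "F \<delta> = (E \<delta> + (1 - \<delta>)) / 2"

text \<open>I(m,t) = q^((q+1)t - m) (q+1)^(m - q t) with q = floor(m/t),
  the maximum number of t-element maximal independent sets of an m-vertex graph.\<close>
definition I :: "nat \<Rightarrow> nat \<Rightarrow> nat" where
  "I m t = (m div t) ^ ((m div t + 1) * t - m) * (m div t + 1) ^ (m - (m div t) * t)"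

end

theory Submission imports Defs begin

text \<open>Everything rests on the integer inequality \<open>(j * 2^(j-1))^5 \<le> 80^j\<close> for \<open>j \<ge> 1\<close>,
  with equality at \<open>j = 5\<close>. Taking logarithms, \<open>log j + j - 1 \<le> j log 80 / 5\<close>; since \<open>2 F \<delta>\<close>
  is a combination of the left-hand sides at \<open>j = \<lfloor>1/\<delta>\<rfloor>\<close> and \<open>j + 1\<close> with weights \<open>u, v \<ge> 0\<close>
  satisfying \<open>u j + v (j+1) = 1\<close>, this bounds \<open>F\<close>. On the other hand \<open>I m t * 2^(m-t)\<close> is a
  product of factors \<open>j * 2^(j-1)\<close> over a partition of \<open>m\<close> into \<open>t\<close> parts, so its fifth power is at
  most \<open>80^m\<close> and every summand is at most \<open>80^(m/10)\<close>; finally \<open>80^(1/10) < 1.55\<close>.\<close>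

lemma two_mul_Suc_pow5_le: "(j::nat) \<ge> 6 \<Longrightarrow> 2 * (j+1)^5 \<le> 5 * j^5"
proof -
  assume "j \<ge> 6"
  then have "(6*(j+1))^5 \<le> (7*j)^5" by (intro power_mono) simp_all
  then have "7776 * (j+1)^5 \<le> 16807 * j^5" by (simp only: power_mult_distrib) simp
  then show ?thesis by linarith
qed

lemma pow5_mul_two_pow_le: "(j::nat)^5 * 2^j \<le> 32 * 5^j"
proof (cases "j \<ge> 6")
  case True
  then show ?thesis
  proof (induction j rule: dec_induct)
    case (step n)
    have "(n+1)^5 * 2^(n+1) = (2*(n+1)^5) * 2^n" by simp
    also have "\<dots> \<le> 5 * (n^5 * 2^n)" using two_mul_Suc_pow5_le[OF step(1)] by simp
    also have "\<dots> \<le> 5 * (32 * 5^n)" using step(3) by (rule mult_le_mono2)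
    finally show ?case by simp
  qed simp
next
  case False
  then consider "j = 0" | "j = 1" | "j = 2" | "j = 3" | "j = 4" | "j = 5" by linarith
  then show ?thesis by cases simp_all
qed

lemma part_pow5_le_80_pow:
  assumes "1 \<le> j" shows "(j * 2^(j-1))^5 \<le> (80::nat)^j"
proof -
  obtain k where j: "j = Suc k" using assms by (cases j) auto
  have "(2::nat)^(k*5) = (2^5)^k" by (metis power_mult mult.commute)
  also have "\<dots> = 2^k * 16^k" by (simp flip: power_mult_distrib)
  finally have "32 * (2^(j-1))^5 = (2::nat)^j * 16^j"
    by (simp add: j flip: power_mult)
  then have "32 * (j * 2^(j-1))^5 = j^5 * 2^j * 16^j"
    by (simp add: power_mult_distrib)
  also have "\<dots> \<le> 32 * 5^j * 16^j" using pow5_mul_two_pow_le[of j] by simp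
  also have "\<dots> = 32 * 80^j" by (simp flip: power_mult_distrib)
  finally show ?thesis by simp
qed

lemma log_part_le:
  assumes "1 \<le> j" shows "log 2 (real j) + real j - 1 \<le> real j * log 2 80 / 5"
proof -
  have "real ((j * 2^(j-1))^5) \<le> real (80^j)"
    using part_pow5_le_80_pow[OF assms] by (rule of_nat_mono)
  then have "log 2 ((real j * 2^(j-1))^5) \<le> log 2 (80^j)"
    using assms by simp
  moreover have "log 2 ((real j * 2^(j-1))^5) = 5 * (log 2 (real j) + (real j - 1))"
    using assms by (simp add: log_mult log_nat_power of_nat_diff)
  ultimately show ?thesis by (simp add: log_nat_power)
qed

lemma F_le: assumes "\<delta> \<in> {0<..1}" shows "F \<delta> \<le> log 2 80 / 10"
proof -
  have \<delta>: "0 < \<delta>" "\<delta> \<le> 1" using assms by auto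
  define n where "n = nat \<lfloor>1/\<delta>\<rfloor>"
  have "1 \<le> \<lfloor>1/\<delta>\<rfloor>" using \<delta> by (simp add: le_floor_iff)
  then have floor_eq: "\<lfloor>1/\<delta>\<rfloor> = int n" unfolding n_def
    by (intro nat_0_le[symmetric]) linarith
  with \<open>1 \<le> \<lfloor>1/\<delta>\<rfloor>\<close> have n: "1 \<le> n" by linarith
  have "real n \<le> 1/\<delta>" "1/\<delta> < real n + 1" using floor_eq by linarith+
  then have "real n * \<delta> \<le> 1" "1 < (real n + 1) * \<delta>" using \<delta> by (simp_all add: field_simps)
  define u where "u = (real n + 1) * \<delta> - 1"
  define v where "v = 1 - real n * \<delta>"
  define L where "L = log 2 80"
  have uv: "0 \<le> u" "0 \<le> v" "u * real n + v * (real n + 1) = 1"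
    using \<open>real n * \<delta> \<le> 1\<close> \<open>1 < (real n + 1) * \<delta>\<close> by (auto simp: u_def v_def algebra_simps)
  have "2 * F \<delta> = u * (log 2 (real n) + real n - 1) + v * (log 2 (real n + 1) + (real n + 1) - 1)"
    by (simp add: F_def E_def floor_eq u_def v_def field_simps)
  also have "\<dots> \<le> u * (real n * L / 5) + v * ((real n + 1) * L / 5)"
    using log_part_le[OF n] log_part_le[of "n+1"] uv
    by (intro add_mono mult_left_mono) (simp_all add: L_def add.commute)
  also have "\<dots> = (u * real n + v * (real n + 1)) * L / 5" by (simp add: field_simps)
  finally show ?thesis using uv(3) by (simp add: L_def)
qed

lemma F_one_fifth: "F (1/5) = log 2 80 / 10"
proof -
  have "log 2 (80::real) = log 2 5 + log 2 16" using log_mult_pos[of 5 16 2] by simp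
  moreover have "log 2 (16::real) = 4" using log_pow_cancel[of "2::real" 4] by simp
  ultimately show ?thesis by (simp add: F_def E_def)
qed

lemma pow_mul_pow_pow5_le:
  fixes x y :: nat
  assumes "x^5 \<le> 80^j" "y^5 \<le> 80^k"
  shows "(x^a * y^r)^5 \<le> 80^(j*a + k*r)"
proof -
  have "(x^a * y^r)^5 = (x^5)^a * (y^5)^r" by (simp add: power_mult_distrib flip: power_mult) (simp add: mult.commute)
  also have "\<dots> \<le> (80^j)^a * (80^k)^r" using assms by (intro mult_mono power_mono) simp_all
  also have "\<dots> = 80^(j*a + k*r)" by (simp add: power_add power_mult)
  finally show ?thesis .
qed

text \<open>With \<open>q = m div t\<close>, the partition of \<open>m\<close> behind \<open>I m t\<close> has \<open>(q+1) t - m\<close> parts of size \<open>q\<close>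
  and \<open>m - q t\<close> parts of size \<open>q + 1\<close>.\<close>

lemma I_mul_two_pow_eq:
  assumes "1 \<le> t" "t \<le> m"
  defines "q \<equiv> m div t"
  shows "I m t * 2^(m-t) = (q * 2^(q-1))^((q+1)*t - m) * ((q+1) * 2^q)^(m - q*t)"
    and "m = q * ((q+1)*t - m) + (q+1) * (m - q*t)"
proof -
  define r where "r = m mod t"
  have "1 \<le> q" using assms by (simp add: q_def div_greater_zero_iff Suc_le_eq)
  have m: "m = q*t + r" "r < t" using assms(1) by (simp_all add: q_def r_def)
  then have a: "(q+1)*t - m = t - r" and b: "m - q*t = r" by (simp_all add: algebra_simps)
  have c: "m - t = (q - 1) * (t - r) + q * r"
    using m \<open>1 \<le> q\<close> by (cases q) (simp_all add: algebra_simps)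
  show "I m t * 2^(m-t) = (q * 2^(q-1))^((q+1)*t - m) * ((q+1) * 2^q)^(m - q*t)"
    unfolding I_def q_def[symmetric] a b c power_add power_mult power_mult_distrib
    by (simp only: mult_ac)
  show "m = q * ((q+1)*t - m) + (q+1) * (m - q*t)"
    unfolding a b using m by (simp add: algebra_simps)
qed

lemma I_mul_two_pow_pow5_le:
  assumes "1 \<le> t" "t \<le> m" shows "(I m t * 2^(m-t))^5 \<le> 80^m"
proof -
  define q where "q = m div t"
  have "1 \<le> q" using assms by (simp add: q_def div_greater_zero_iff Suc_le_eq)
  have "(q * 2^(q-1))^5 \<le> 80^q" "((q+1) * 2^q)^5 \<le> 80^(q+1)"
    using part_pow5_le_80_pow[OF \<open>1 \<le> q\<close>] part_pow5_le_80_pow[of "q+1"] by simp_all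
  note I_eq = I_mul_two_pow_eq[OF assms, folded q_def]
  have "(I m t * 2^(m-t))^5 \<le> 80^(q * ((q+1)*t - m) + (q+1) * (m - q*t))"
    unfolding I_eq(1) by (rule pow_mul_pow_pow5_le) fact+
  then show ?thesis using I_eq(2) by simp
qed

lemma summand_le:
  assumes "1 \<le> t" "t \<le> m"
  shows "sqrt (real (I m t)) * 2 powr ((real m - real t) / 2) \<le> 80 powr (real m / 10)"
proof -
  define N where "N = I m t * 2^(m-t)"
  have "(2::real) powr ((real m - real t) / 2) = sqrt (2 ^ (m-t))"
    using assms by (simp add: powr_half_sqrt_powr of_nat_diff flip: powr_realpow)
  then have summand: "sqrt (real (I m t)) * 2 powr ((real m - real t) / 2) = sqrt (real N)"
    by (simp add: N_def real_sqrt_mult)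
  have "sqrt (real N) ^ 10 = (sqrt (real N) ^ 2) ^ 5" using power_mult[of "sqrt (real N)" 2 5] by simp
  also have "\<dots> = real (N^5)" by simp
  also have "\<dots> \<le> real (80^m)" unfolding N_def using I_mul_two_pow_pow5_le[OF assms] by (rule of_nat_mono)
  also have "\<dots> = (80 powr (real m / 10)) ^ 10" by (simp add: powr_powr flip: powr_realpow)
  finally show ?thesis
    unfolding summand using power_mono_iff[of "sqrt (real N)" "80 powr (real m / 10)" 10] by simp
qed

lemma sum_summands_le:
  "(\<Sum>t=1..m. sqrt (real (I m t)) * 2 powr ((real m - real t) / 2)) \<le> real m * 80 powr (real m / 10)"
  using sum_bounded_above[of "{1..m}", OF summand_le] by simp

lemma real_mul_80_powr_bigo: "(\<lambda>m::nat. real m * 80 powr (real m / 10)) \<in> O(\<lambda>m. 1.55 powr real m)"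
proof -
  define b :: real where "b = 80 powr (1/10)"
  have b: "0 < b" "80 powr (real m / 10) = b ^ m" for m :: nat
    by (simp_all add: b_def powr_powr flip: powr_realpow)
  have "b ^ 10 < 1.55 ^ 10" using b(2)[of 10] by (simp add: power_divide)
  then have "b < 1.55" by (rule power_less_imp_less_base) simp
  define e where "e = 1.55 / b - 1"
  have e: "0 < e" using b \<open>b < 1.55\<close> by (simp add: e_def field_simps)
  have "real m * 80 powr (real m / 10) \<le> (1/e) * 1.55 powr real m" for m :: nat
  proof -
    have "1 + real m * e \<le> (1 + e) ^ m" using e by (intro Bernoulli_inequality) simp
    then have "real m * e \<le> (1.55 / b) ^ m" by (simp add: e_def)
    then have "real m * e * b ^ m \<le> (1.55 / b) ^ m * b ^ m"
      using b(1) by (intro mult_right_mono) simp_all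
    also have "\<dots> = 1.55 ^ m" using b(1) by (simp add: power_divide)
    finally show ?thesis using b e by (simp add: field_simps powr_realpow)
  qed
  then show ?thesis by (intro bigoI[where c="1/e"] always_eventually) simp
qed

theorem mainTheorem8:
  shows "(\<forall>\<delta>\<in>{0<..1}. F \<delta> \<le> log 2 80 / 10)
    \<and> F (1/5) = log 2 80 / 10
    \<and> (\<exists>c::nat. (\<lambda>m::nat. \<Sum>t=1..m. sqrt (real (I m t)) * 2 powr ((real m - real t) / 2))
           \<in> O(\<lambda>m. real m ^ c * 80 powr (real m / 10)))
    \<and> (\<lambda>m::nat. \<Sum>t=1..m. sqrt (real (I m t)) * 2 powr ((real m - real t) / 2))
           \<in> O(\<lambda>m. 1.55 powr real m)"
proof -
  let ?S = "\<lambda>m::nat. \<Sum>t=1..m. sqrt (real (I m t)) * 2 powr ((real m - real t) / 2)"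
  have "?S \<in> O(\<lambda>m. real m * 80 powr (real m / 10))"
    using sum_summands_le by (intro bigoI[where c=1] always_eventually) (simp add: sum_nonneg)
  moreover from this have "?S \<in> O(\<lambda>m. 1.55 powr real m)"
    using real_mul_80_powr_bigo by (rule landau_o.big_trans)
  ultimately show ?thesis using F_le F_one_fifth by (simp add: exI[of _ 1])
qed

end
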